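(* Let $A$ be a real $N\times N$ matrix, $B$ a real $N\times m$ matrix and $K$ a real $m\times N$ matrix, and set $A_1=-BK$. Suppose there exist symmetric $N\times N$ matrices $P>0$ and $Q>0$ such that $(A+A_1)^\top P+P(A+A_1)=-Q$, so that $V(x)=x^\top P x$ is a Lyapunov function for the continuous closed-loop system $\dot x(t)=(A+A_1)x(t)$, with $\dot V(x)=-x^\top Q x<0$ for $x\neq 0$. Then there is a constant $c'>0$ such that, for every hold length $$\Delta\le c'\,\frac{\sigma_{\min}(Q)}{\sigma_{\max}(P)\,\big(\sigma_{\max}(A)+\sigma_{\max}(A_1)\big)^2},$$ the sampled-data (piecewise-constant control) system $$\dot x(t)=Ax(t)+A_1x(t_k),\qquad t\in[t_k,t_{k+1}),\ k=0,1,\dots,$$ with sampling instants satisfying $t_{k+1}-t_k\le\Delta$, is asymptotically stable.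
   Context: $\sigma_{\min}(\cdot)$ and $\sigma_{\max}(\cdot)$ denote the minimum and maximum singular values of a matrix. The sampling instants $0=t_0<t_1<t_2<\cdots$ are such that the control $A_1x(t_k)$ is held constant on each holding period $[t_k,t_{k+1})$ (zero-order hold). $x(t)$ is the error state relative to the equilibrium $0$. *)

theory Defs
  imports "HOL-Analysis.Analysis"
begin

text \<open>Largest singular value = operator 2-norm of the induced linear map.\<close>
definition sigma_max :: "real^'n^'m \<Rightarrow> real" where
  "sigma_max M = onorm (\<lambda>x. M *v x)"

definition sigma_min :: "real^'n^'m \<Rightarrow> real" where
  "sigma_min M = Inf {norm (M *v x) | x. norm x = 1}"

definition sym_pos_def :: "real^'n^'n \<Rightarrow> bool" where
  "sym_pos_def P \<longleftrightarrow> transpose P = P \<and> (\<forall>x. x \<noteq> 0 \<longrightarrow> 0 < x \<bullet> (P *v x))"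

text \<open>x is a solution of the sampled-data system  x' = A x(t) + A1 x(t_k) on every
  holding interval [t_k, t_{k+1}) (continuous, with left derivative at t_{k+1}).\<close>
definition sampled_solution ::
  "real^'n^'n \<Rightarrow> real^'n^'n \<Rightarrow> (nat \<Rightarrow> real) \<Rightarrow> (real \<Rightarrow> real^'n) \<Rightarrow> bool" where
  "sampled_solution A A1 ts x \<longleftrightarrow>
     (\<forall>k. \<forall>s\<in>{ts k..ts (Suc k)}.
        (x has_vector_derivative (A *v x s + A1 *v x (ts k))) (at s within {ts k..ts (Suc k)}))"

definition sampled_asymp_stable ::
  "real^'n^'n \<Rightarrow> real^'n^'n \<Rightarrow> (nat \<Rightarrow> real) \<Rightarrow> bool" where
  "sampled_asymp_stable A A1 ts \<longleftrightarrow>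
     (\<forall>\<epsilon>>0. \<exists>\<delta>>0. \<forall>x. sampled_solution A A1 ts x \<and> norm (x 0) < \<delta> \<longrightarrow>
          (\<forall>t\<ge>0. norm (x t) < \<epsilon>)) \<and>
     (\<exists>\<eta>>0. \<forall>x. sampled_solution A A1 ts x \<and> norm (x 0) < \<eta> \<longrightarrow>
          (x \<longlongrightarrow> 0) at_top)"

end

theory Submission
  imports Defs
begin

(* On a holding interval [t_k, t_(k+1)] of length h the solution solves x' = A x + A1 x(t_k).
   With L = sigma_max A + sigma_max A1 and L h <= 1/4, a Gronwall-type argument gives
   |x(t) - x(t_k)| <= 4 L h |x(t)|.  Writing x' = (A + A1) x + A1 (x(t_k) - x), the Lyapunov
   equation yields for V(x) = x^T P x and q = sigma_min Q
     V' <= - q |x|^2 + 8 sigma_max P sigma_max A1 L h |x|^2.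
   The Lyapunov equation also forces q <= 2 sigma_max P L, so h <= q / (16 sigma_max P L^2)
   gives L h <= 1/8 and bounds the perturbation by q/2 |x|^2.  Hence V' <= - q / (2 sigma_max P) V
   on every holding interval, V decays exponentially across the sampling instants, and
   positive definiteness of P turns this into exponential decay of |x|: c' = 1/16 works. *)

lemma matrix_vector_mult_uminus_left: "(- M) *v x = - (M *v x)"
  for M :: "real^'n^'m"
  by (simp add: vec_eq_iff matrix_vector_mult_def sum_negf)

lemma inner_transpose_matrix_vector: "x \<bullet> (transpose M *v y) = (M *v x) \<bullet> y"
  for M :: "real^'n^'m"
  by (metis dot_lmul_matrix vector_transpose_matrix)

lemma inner_symmetric_matrix_vector:
  fixes M :: "real^'n^'n"
  assumes "transpose M = M"
  shows "x \<bullet> (M *v y) = (M *v x) \<bullet> y"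
  by (metis assms inner_transpose_matrix_vector)

lemma lyapunov_quadratic_form:
  fixes M P Q :: "real^'n^'n"
  assumes symP: "transpose P = P" and lyap: "transpose M ** P + P ** M = - Q"
  shows "x \<bullet> (Q *v x) = - 2 * ((P *v x) \<bullet> (M *v x))"
proof -
  have "Q = - (transpose M ** P + P ** M)" using lyap by simp
  then have "Q *v x = - (transpose M *v (P *v x) + P *v (M *v x))"
    by (simp only: matrix_vector_mult_uminus_left matrix_vector_mult_add_rdistrib
        matrix_vector_mul_assoc)
  then show ?thesis
    using inner_transpose_matrix_vector[of x M "P *v x"]
      inner_symmetric_matrix_vector[OF symP, of x "M *v x"]
    by (simp add: inner_add_right inner_diff_right inner_commute)
qed

lemma norm_matrix_vector_le_sigma_max: "norm (M *v x) \<le> sigma_max M * norm x"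
  for M :: "real^'n^'m"
  unfolding sigma_max_def by (rule onorm) simp

lemma sigma_max_nonneg: "0 \<le> sigma_max M"
  for M :: "real^'n^'m"
  unfolding sigma_max_def by (rule onorm_pos_le) simp

lemma sigma_max_add: "sigma_max (M + N) \<le> sigma_max M + sigma_max N"
  for M N :: "real^'n^'m"
  unfolding sigma_max_def matrix_vector_mult_add_rdistrib
  by (intro onorm_triangle matrix_vector_mul_bounded_linear)

lemma sigma_min_le_norm: "norm x = 1 \<Longrightarrow> sigma_min M \<le> norm (M *v x)"
  for M :: "real^'n^'m"
  unfolding sigma_min_def by (rule cInf_lower) (auto intro: bdd_belowI[where m=0])

lemma quadratic_form_le_sigma_max: "x \<bullet> (M *v x) \<le> sigma_max M * (norm x)^2"
  for M :: "real^'n^'n"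
proof -
  have "x \<bullet> (M *v x) \<le> norm x * norm (M *v x)" by (rule norm_cauchy_schwarz)
  also have "\<dots> \<le> norm x * (sigma_max M * norm x)"
    by (intro mult_left_mono norm_matrix_vector_le_sigma_max) simp
  finally show ?thesis by (simp add: power2_eq_square algebra_simps)
qed

lemma linear_coeff_eq_0_if_quadratic_nonneg:
  fixes a c :: real
  assumes nonneg: "\<And>s. 0 \<le> 2 * s * a + s^2 * c"
  shows "a = 0"
proof -
  define r where "r = \<bar>c\<bar> + 1"
  define s where "s = - a / r"
  have r: "0 < r" unfolding r_def by simp
  have "0 \<le> (2 * s * a + s^2 * c) * r^2" using nonneg by simp
  also have "\<dots> = 2 * a * (s * r) * r + c * (s * r)^2"
    by (simp add: algebra_simps power2_eq_square)
  also have "s * r = - a" unfolding s_def using r by simp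
  also have "2 * a * (- a) * r + c * (- a)^2 = a^2 * (c - 2 * \<bar>c\<bar> - 2)"
    unfolding r_def by (simp add: algebra_simps power2_eq_square)
  finally have "0 \<le> a^2 * (c - 2 * \<bar>c\<bar> - 2)" .
  moreover have "c - 2 * \<bar>c\<bar> - 2 < 0" by linarith
  ultimately show ?thesis by (simp add: zero_le_mult_iff)
qed

lemma quadratic_form_min_on_sphere:
  fixes M :: "real^'n^'n"
  obtains v where "norm v = 1" "\<And>x. (v \<bullet> (M *v v)) * (norm x)^2 \<le> x \<bullet> (M *v x)"
proof -
  have cont: "continuous_on (sphere 0 1) (\<lambda>x::real^'n. x \<bullet> (M *v x))"
    by (intro continuous_intros linear_continuous_on matrix_vector_mul_bounded_linear)
  obtain w :: "real^'n" where "norm w = 1" using vector_choose_size[of 1] by auto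
  then have "sphere (0::real^'n) 1 \<noteq> {}" by auto
  then obtain v where v: "norm v = 1"
    and vmin: "\<And>u. norm u = 1 \<Longrightarrow> v \<bullet> (M *v v) \<le> u \<bullet> (M *v u)"
    using continuous_attains_inf[OF compact_sphere _ cont] by auto
  have "(v \<bullet> (M *v v)) * (norm x)^2 \<le> x \<bullet> (M *v x)" for x
  proof (cases "x = 0")
    case False
    define u where "u = (1 / norm x) *\<^sub>R x"
    have "v \<bullet> (M *v v) \<le> u \<bullet> (M *v u)" using False by (intro vmin) (simp add: u_def)
    also have "u \<bullet> (M *v u) = (x \<bullet> (M *v x)) / (norm x)^2"
      unfolding u_def by (simp add: matrix_vector_mult_scaleR power2_eq_square)
    finally show ?thesis using False by (simp add: pos_le_divide_eq)
  qed simp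
  with v that show ?thesis by blast
qed

lemma quadratic_form_minimizer_eigenvector:
  fixes M :: "real^'n^'n"
  assumes symM: "transpose M = M" and v: "norm v = 1"
    and vmin: "\<And>x. (v \<bullet> (M *v v)) * (norm x)^2 \<le> x \<bullet> (M *v x)"
  shows "M *v v = (v \<bullet> (M *v v)) *\<^sub>R v"
proof -
  define mu where "mu = v \<bullet> (M *v v)"
  define d where "d = M *v v - mu *\<^sub>R v"
  have vv: "v \<bullet> v = 1" using v by (simp add: norm_eq_sqrt_inner)
  have vd: "v \<bullet> (M *v d) = d \<bullet> (M *v v)"
    using inner_symmetric_matrix_vector[OF symM, of v d] by (simp add: inner_commute)
  have dd: "d \<bullet> (M *v v) - mu * (v \<bullet> d) = d \<bullet> d"
    unfolding d_def by (simp add: inner_diff_left inner_diff_right inner_commute algebra_simps)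
  \<comment> \<open>first-order condition at the minimiser v in the direction d: the linear coefficient is |d|^2\<close>
  have "0 \<le> 2 * s * (d \<bullet> d) + s^2 * (d \<bullet> (M *v d) - mu * (d \<bullet> d))" for s
  proof -
    have "mu * (norm (v + s *\<^sub>R d))^2 \<le> (v + s *\<^sub>R d) \<bullet> (M *v (v + s *\<^sub>R d))"
      unfolding mu_def by (rule vmin)
    then show ?thesis
      using vv vd dd unfolding power2_norm_eq_inner mu_def
      by (simp add: matrix_vector_right_distrib matrix_vector_mult_scaleR inner_add_left
          inner_add_right inner_commute algebra_simps power2_eq_square)
  qed
  then have "d \<bullet> d = 0" by (rule linear_coeff_eq_0_if_quadratic_nonneg)
  then show ?thesis unfolding d_def mu_def by simp
qed

lemma sym_pos_def_quadratic_form_ge: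
  fixes P :: "real^'n^'n"
  assumes "sym_pos_def P"
  obtains l where "0 < l" "\<And>x. l * (norm x)^2 \<le> x \<bullet> (P *v x)"
proof -
  obtain v where v: "norm v = 1" and vmin: "\<And>x. (v \<bullet> (P *v v)) * (norm x)^2 \<le> x \<bullet> (P *v x)"
    using quadratic_form_min_on_sphere[of P] by blast
  have "v \<noteq> 0" using v by auto
  then have "0 < v \<bullet> (P *v v)" using assms unfolding sym_pos_def_def by blast
  with vmin that show ?thesis by blast
qed

lemma sigma_min_quadratic_form_le:
  fixes Q :: "real^'n^'n"
  assumes posQ: "sym_pos_def Q"
  shows "sigma_min Q * (norm x)^2 \<le> x \<bullet> (Q *v x)"
proof -
  obtain v where v: "norm v = 1" and vmin: "\<And>x. (v \<bullet> (Q *v v)) * (norm x)^2 \<le> x \<bullet> (Q *v x)"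
    using quadratic_form_min_on_sphere[of Q] by blast
  have eig: "Q *v v = (v \<bullet> (Q *v v)) *\<^sub>R v"
    using posQ v vmin unfolding sym_pos_def_def by (intro quadratic_form_minimizer_eigenvector) auto
  have "v \<noteq> 0" using v by auto
  then have "0 < v \<bullet> (Q *v v)" using posQ unfolding sym_pos_def_def by blast
  then have "norm (Q *v v) = v \<bullet> (Q *v v)" by (subst eig) (simp add: v)
  then have "sigma_min Q \<le> v \<bullet> (Q *v v)" using sigma_min_le_norm[OF v, of Q] by simp
  then have "sigma_min Q * (norm x)^2 \<le> (v \<bullet> (Q *v v)) * (norm x)^2"
    by (simp add: mult_right_mono)
  also have "\<dots> \<le> x \<bullet> (Q *v x)" by (rule vmin)
  finally show ?thesis .
qed

lemma lyapunov_rate_le_sigma_max: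
  fixes M P Q :: "real^'n^'n"
  assumes symP: "transpose P = P" and lyap: "transpose M ** P + P ** M = - Q"
    and Qge: "\<And>x. q * (norm x)^2 \<le> x \<bullet> (Q *v x)"
  shows "q \<le> 2 * sigma_max P * sigma_max M"
proof -
  obtain v :: "real^'n" where v: "norm v = 1" using vector_choose_size[of 1] by auto
  have "q \<le> v \<bullet> (Q *v v)" using Qge[of v] v by simp
  also have "\<dots> = - 2 * ((P *v v) \<bullet> (M *v v))" by (rule lyapunov_quadratic_form[OF symP lyap])
  also have "\<dots> \<le> 2 * (norm (P *v v) * norm (M *v v))"
    using norm_cauchy_schwarz[of "- (P *v v)" "M *v v"]
    unfolding inner_minus_left norm_minus_cancel by linarith
  also have "\<dots> \<le> 2 * (sigma_max P * sigma_max M)"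
  proof -
    have "norm (P *v v) \<le> sigma_max P" "norm (M *v v) \<le> sigma_max M"
      using norm_matrix_vector_le_sigma_max[of _ v] v by auto
    then show ?thesis by (simp add: mult_mono sigma_max_nonneg)
  qed
  finally show ?thesis by simp
qed

lemma hold_interval_increment_le:
  fixes A A1 :: "real^'n^'n" and x :: "real \<Rightarrow> real^'n"
  assumes der: "\<And>s. s \<in> {t0..t1} \<Longrightarrow>
      (x has_vector_derivative (A *v x s + A1 *v x t0)) (at s within {t0..t1})"
    and bound: "\<And>s. s \<in> {t0..t1} \<Longrightarrow> norm (x s) \<le> R"
    and s: "s \<in> {t0..t1}"
  shows "norm (x s - x t0) \<le> (sigma_max A + sigma_max A1) * (t1 - t0) * R"
proof -
  have t0: "t0 \<in> {t0..t1}" using s by simp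
  have "norm (x s - x t0) \<le> (sigma_max A * R + sigma_max A1 * R) * norm (s - t0)"
  proof (rule differentiable_bound[where f' = "\<lambda>s h. h *\<^sub>R (A *v x s + A1 *v x t0)"])
    show "(x has_derivative (\<lambda>h. h *\<^sub>R (A *v x s + A1 *v x t0))) (at s within {t0..t1})"
      if "s \<in> {t0..t1}" for s
      using der[OF that] unfolding has_vector_derivative_def .
    show "onorm (\<lambda>h. h *\<^sub>R (A *v x s + A1 *v x t0)) \<le> sigma_max A * R + sigma_max A1 * R"
      if "s \<in> {t0..t1}" for s
    proof -
      have "onorm (\<lambda>h::real. h *\<^sub>R (A *v x s + A1 *v x t0)) = norm (A *v x s + A1 *v x t0)"
        using onorm_scaleR_left[OF bounded_linear_ident] by (simp add: onorm_id)
      also have "\<dots> \<le> sigma_max A * norm (x s) + sigma_max A1 * norm (x t0)"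
        by (intro norm_triangle_le add_mono norm_matrix_vector_le_sigma_max)
      also have "\<dots> \<le> sigma_max A * R + sigma_max A1 * R"
        using bound[OF that] bound[OF t0]
        by (intro add_mono mult_left_mono) (auto simp: sigma_max_nonneg)
      finally show ?thesis .
    qed
  qed (use s t0 in auto)
  also have "\<dots> \<le> (sigma_max A * R + sigma_max A1 * R) * (t1 - t0)"
  proof (rule mult_left_mono)
    have "0 \<le> R" using bound[OF s] norm_ge_zero[of "x s"] by linarith
    then show "0 \<le> sigma_max A * R + sigma_max A1 * R" by (simp add: sigma_max_nonneg)
  qed (use s in simp)
  finally show ?thesis by (simp add: algebra_simps)
qed

lemma hold_interval_increment_le_relative:
  fixes A A1 :: "real^'n^'n" and x :: "real \<Rightarrow> real^'n"
  assumes der: "\<And>s. s \<in> {t0..t1} \<Longrightarrow>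
      (x has_vector_derivative (A *v x s + A1 *v x t0)) (at s within {t0..t1})"
    and short: "(sigma_max A + sigma_max A1) * (t1 - t0) \<le> 1/4"
    and s: "s \<in> {t0..t1}"
  shows "norm (x s - x t0) \<le> 4 * ((sigma_max A + sigma_max A1) * (t1 - t0)) * norm (x s)"
proof -
  define \<theta> where "\<theta> = (sigma_max A + sigma_max A1) * (t1 - t0)"
  have \<theta>: "0 \<le> \<theta>" "\<theta> \<le> 1/4"
    using s short unfolding \<theta>_def by (auto simp: sigma_max_nonneg)
  have t0: "t0 \<in> {t0..t1}" using s by simp
  have "continuous_on {t0..t1} x" using der by (rule continuous_on_vector_derivative)
  then obtain smax where smax: "smax \<in> {t0..t1}"
    and max: "\<And>s. s \<in> {t0..t1} \<Longrightarrow> norm (x s) \<le> norm (x smax)"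
    using continuous_attains_sup[OF compact_Icc _ continuous_on_norm] t0 by blast
  define R where "R = norm (x smax)"
  have incr: "norm (x s - x t0) \<le> \<theta> * R" if "s \<in> {t0..t1}" for s
    unfolding \<theta>_def R_def by (rule hold_interval_increment_le[OF der max that])
  have "R \<le> norm (x t0) + \<theta> * R"
    using incr[OF smax] norm_triangle_ineq2[of "x smax" "x t0"] unfolding R_def by linarith
  then have R: "R \<le> 2 * norm (x t0)"
    using \<theta> mult_right_mono[OF \<theta>(2), of R] norm_ge_zero[of "x smax"] unfolding R_def by linarith
  have "norm (x t0) \<le> norm (x s) + \<theta> * R"
    using incr[OF s] norm_triangle_ineq3[of "x s" "x t0"] norm_minus_commute[of "x s" "x t0"]
    by linarith
  then have xt0: "norm (x t0) \<le> 2 * norm (x s)"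
    using \<theta> R mult_left_mono[OF R \<theta>(1)] mult_right_mono[OF \<theta>(2), of "norm (x t0)"] by simp
  have "norm (x s - x t0) \<le> \<theta> * (2 * (2 * norm (x s)))"
    using incr[OF s] mult_left_mono[OF R \<theta>(1)] mult_left_mono[OF xt0 \<theta>(1)] by linarith
  then show ?thesis unfolding \<theta>_def by simp
qed

lemma lyapunov_derivative_le:
  fixes A A1 P Q :: "real^'n^'n"
  assumes symP: "transpose P = P" and lyap: "transpose (A + A1) ** P + P ** (A + A1) = - Q"
    and Qge: "\<And>x. q * (norm x)^2 \<le> x \<bullet> (Q *v x)"
    and close: "norm (z - y) \<le> e * norm y"
    and small: "2 * sigma_max P * sigma_max A1 * e \<le> q / 2"
  shows "2 * ((P *v y) \<bullet> (A *v y + A1 *v z)) \<le> - (q / 2) * (norm y)^2"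
proof -
  have split: "A *v y + A1 *v z = (A + A1) *v y + A1 *v (z - y)"
    by (simp add: matrix_vector_mult_add_rdistrib matrix_vector_right_distrib algebra_simps)
  have nominal: "2 * ((P *v y) \<bullet> ((A + A1) *v y)) \<le> - q * (norm y)^2"
    using Qge[of y] lyapunov_quadratic_form[OF symP lyap, of y] by simp
  have "2 * ((P *v y) \<bullet> (A1 *v (z - y))) \<le> 2 * (norm (P *v y) * norm (A1 *v (z - y)))"
    using norm_cauchy_schwarz[of "P *v y" "A1 *v (z - y)"] by linarith
  also have "\<dots> \<le> 2 * ((sigma_max P * norm y) * (sigma_max A1 * (e * norm y)))"
    using close
    by (intro mult_left_mono mult_mono norm_matrix_vector_le_sigma_max order_trans[OF
          norm_matrix_vector_le_sigma_max]) (auto simp: sigma_max_nonneg)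
  also have "\<dots> = (2 * sigma_max P * sigma_max A1 * e) * (norm y)^2"
    by (simp add: power2_eq_square algebra_simps)
  also have "\<dots> \<le> (q / 2) * (norm y)^2" using small by (rule mult_right_mono) simp
  finally show ?thesis using nominal unfolding split by (simp add: inner_add_right algebra_simps)
qed

lemma lyapunov_derivative_le_on_hold_interval:
  fixes A A1 P Q :: "real^'n^'n" and x :: "real \<Rightarrow> real^'n"
  assumes der: "\<And>s. s \<in> {t0..t1} \<Longrightarrow>
      (x has_vector_derivative (A *v x s + A1 *v x t0)) (at s within {t0..t1})"
    and symP: "transpose P = P" and lyap: "transpose (A + A1) ** P + P ** (A + A1) = - Q"
    and Qge: "\<And>x. q * (norm x)^2 \<le> x \<bullet> (Q *v x)"
    and p: "0 < sigma_max P"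
    and hold: "16 * sigma_max P * (sigma_max A + sigma_max A1)^2 * (t1 - t0) \<le> q"
    and s: "s \<in> {t0..t1}"
  shows "2 * ((P *v x s) \<bullet> (A *v x s + A1 *v x t0)) \<le> - (q / 2) * (norm (x s))^2"
proof -
  define L where "L = sigma_max A + sigma_max A1"
  define \<theta> where "\<theta> = L * (t1 - t0)"
  have L_nonneg: "0 \<le> L" and A1_le: "sigma_max A1 \<le> L" and \<theta>_nonneg: "0 \<le> \<theta>"
    using s unfolding L_def \<theta>_def by (auto simp: sigma_max_nonneg)
  have "q \<le> 2 * sigma_max P * sigma_max (A + A1)"
    \<comment> \<open>the hold condition bounds only L^2 h; this is what makes L h small\<close>
    by (rule lyapunov_rate_le_sigma_max[OF symP lyap Qge])
  also have "\<dots> \<le> 2 * sigma_max P * L"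
    unfolding L_def using p by (intro mult_left_mono sigma_max_add) auto
  finally have "2 * sigma_max P * (8 * L * \<theta>) \<le> 2 * sigma_max P * L"
    using hold unfolding \<theta>_def L_def by (simp add: power2_eq_square algebra_simps)
  then have "L * (8 * \<theta>) \<le> L * 1" using p by simp
  then have short: "\<theta> \<le> 1/8"
    using L_nonneg \<theta>_nonneg unfolding \<theta>_def by (cases "L = 0") auto
  have "norm (x t0 - x s) \<le> 4 * \<theta> * norm (x s)"
    using hold_interval_increment_le_relative[OF der _ s] short
    unfolding \<theta>_def L_def by (simp add: norm_minus_commute)
  moreover have "2 * sigma_max P * sigma_max A1 * (4 * \<theta>) \<le> q / 2"
  proof -
    have "2 * sigma_max P * sigma_max A1 * (4 * \<theta>) \<le> 2 * sigma_max P * L * (4 * \<theta>)"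
      using p A1_le \<theta>_nonneg by (intro mult_right_mono mult_left_mono) auto
    also have "\<dots> = 8 * sigma_max P * L^2 * (t1 - t0)"
      unfolding \<theta>_def by (simp add: power2_eq_square)
    finally show ?thesis using hold unfolding L_def by simp
  qed
  ultimately show ?thesis by (rule lyapunov_derivative_le[OF symP lyap Qge])
qed

lemma nonincreasing_if_derivative_nonpos_within:
  fixes f f' :: "real \<Rightarrow> real"
  assumes der: "\<And>s. s \<in> {a..b} \<Longrightarrow> (f has_real_derivative f' s) (at s within {a..b})"
    and nonpos: "\<And>s. s \<in> {a..b} \<Longrightarrow> f' s \<le> 0"
    and t: "t \<in> {a..b}"
  shows "f t \<le> f a"
proof (rule DERIV_nonpos_imp_decreasing_open[of a t f])
  show "a \<le> t" using t by simp
  have "continuous_on {a..b} f" using der by (rule DERIV_continuous_on)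
  then show "continuous_on {a..t} f" by (rule continuous_on_subset) (use t in auto)
  show "\<exists>y. (f has_real_derivative y) (at s) \<and> y \<le> 0" if "a < s" "s < t" for s
    using der[of s] nonpos[of s] at_within_Icc_at[of a s b] that t by auto
qed

lemma lyapunov_decay_on_hold_interval:
  fixes A A1 P Q :: "real^'n^'n" and x :: "real \<Rightarrow> real^'n"
  assumes der: "\<And>s. s \<in> {t0..t1} \<Longrightarrow>
      (x has_vector_derivative (A *v x s + A1 *v x t0)) (at s within {t0..t1})"
    and symP: "transpose P = P" and lyap: "transpose (A + A1) ** P + P ** (A + A1) = - Q"
    and Qge: "\<And>x. q * (norm x)^2 \<le> x \<bullet> (Q *v x)"
    and p: "0 < sigma_max P"
    and hold: "16 * sigma_max P * (sigma_max A + sigma_max A1)^2 * (t1 - t0) \<le> q"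
    and t: "t \<in> {t0..t1}"
  shows "exp (q / (2 * sigma_max P) * t) * (x t \<bullet> (P *v x t))
    \<le> exp (q / (2 * sigma_max P) * t0) * (x t0 \<bullet> (P *v x t0))"
proof -
  define g where "g = q / (2 * sigma_max P)"
  define V where "V s = x s \<bullet> (P *v x s)" for s
  define V' where "V' s = 2 * ((P *v x s) \<bullet> (A *v x s + A1 *v x t0))" for s
  have "0 \<le> 16 * sigma_max P * (sigma_max A + sigma_max A1)^2 * (t1 - t0)"
    using p t by simp
  then have "0 \<le> q" using hold by linarith
  then have g: "0 \<le> g" unfolding g_def using p by simp
  have dV: "(V has_real_derivative V' s) (at s within {t0..t1})" if s: "s \<in> {t0..t1}" for s
  proof -
    define D where "D = A *v x s + A1 *v x t0"
    have "(V has_vector_derivative x s \<bullet> (P *v D) + D \<bullet> (P *v x s)) (at s within {t0..t1})"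
      unfolding V_def D_def
      by (intro bounded_bilinear.has_vector_derivative[OF bounded_bilinear_inner] der[OF s]
          bounded_linear.has_vector_derivative[OF matrix_vector_mul_bounded_linear])
    moreover have "x s \<bullet> (P *v D) + D \<bullet> (P *v x s) = V' s"
      unfolding V'_def D_def[symmetric] inner_symmetric_matrix_vector[OF symP, of "x s"]
      by (simp add: inner_commute)
    ultimately show ?thesis by (simp add: has_real_derivative_iff_has_vector_derivative)
  qed
  have dW: "((\<lambda>s. exp (g * s) * V s) has_real_derivative exp (g * s) * (g * V s + V' s))
      (at s within {t0..t1})" if "s \<in> {t0..t1}" for s
  proof (rule DERIV_cong[OF DERIV_mult[OF _ dV[OF that]]])
    show "((\<lambda>s. exp (g * s)) has_real_derivative exp (g * s) * g) (at s within {t0..t1})"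
      by (auto intro!: derivative_eq_intros)
  qed (simp add: algebra_simps)
  have "exp (g * s) * (g * V s + V' s) \<le> 0" if s: "s \<in> {t0..t1}" for s
  proof -
    have "g * V s \<le> g * (sigma_max P * (norm (x s))^2)"
      unfolding V_def using g by (intro mult_left_mono quadratic_form_le_sigma_max)
    also have "\<dots> = (q / 2) * (norm (x s))^2" unfolding g_def using p by simp
    finally have "g * V s + V' s \<le> 0"
      using lyapunov_derivative_le_on_hold_interval[OF der symP lyap Qge p hold s]
      unfolding V'_def by simp
    then show ?thesis by (simp add: mult_nonneg_nonpos)
  qed
  from nonincreasing_if_derivative_nonpos_within[OF dW this t]
  show ?thesis unfolding g_def V_def .
qed

lemma sampling_interval_containing:
  fixes ts :: "nat \<Rightarrow> real"
  assumes ts0: "ts 0 = 0" and unbounded: "filterlim ts at_top sequentially" and t: "0 \<le> t"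
  obtains k where "t \<in> {ts k..ts (Suc k)}"
proof -
  have "eventually (\<lambda>n. t + 1 \<le> ts n) sequentially"
    using unbounded by (simp add: filterlim_at_top)
  then obtain N where "\<forall>n\<ge>N. t + 1 \<le> ts n" by (auto simp: eventually_sequentially)
  then have "t < ts N" by fastforce
  then obtain n where "t < ts n" ..
  define m where "m = (LEAST n. t < ts n)"
  have after: "t < ts m" unfolding m_def using \<open>t < ts n\<close> by (rule LeastI)
  then obtain k where k: "m = Suc k" using ts0 t by (cases m) auto
  have "\<not> t < ts k" using not_less_Least[of k "\<lambda>n. t < ts n"] k unfolding m_def by simp
  then show ?thesis using after k by (intro that[of k]) auto
qed

lemma le_initial_if_nonincreasing_on_sampling_intervals:
  fixes W :: "real \<Rightarrow> real" and ts :: "nat \<Rightarrow> real"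
  assumes ts0: "ts 0 = 0" and mono: "\<And>k. ts k \<le> ts (Suc k)"
    and unbounded: "filterlim ts at_top sequentially"
    and decr: "\<And>k s. s \<in> {ts k..ts (Suc k)} \<Longrightarrow> W s \<le> W (ts k)"
    and t: "0 \<le> t"
  shows "W t \<le> W 0"
proof -
  have at_samples: "W (ts k) \<le> W 0" for k
  proof (induction k)
    case (Suc k)
    have "W (ts (Suc k)) \<le> W (ts k)" using mono[of k] by (intro decr) simp
    then show ?case using Suc by simp
  qed (simp add: ts0)
  obtain k where "t \<in> {ts k..ts (Suc k)}"
    using sampling_interval_containing[OF ts0 unbounded t] .
  then show ?thesis using decr at_samples order_trans by blast
qed

lemma sampled_asymp_stable_if_exponential_bound:
  fixes A A1 :: "real^'n^'n" and ts :: "nat \<Rightarrow> real"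
  assumes C: "0 < C" and g: "0 < g"
    and bound: "\<And>x t. sampled_solution A A1 ts x \<Longrightarrow> 0 \<le> t \<Longrightarrow>
        (norm (x t))^2 \<le> C * (norm (x 0))^2 * exp (- g * t)"
  shows "sampled_asymp_stable A A1 ts"
  unfolding sampled_asymp_stable_def
proof (intro conjI allI impI)
  fix \<epsilon> :: real assume \<epsilon>: "0 < \<epsilon>"
  show "\<exists>\<delta>>0. \<forall>x. sampled_solution A A1 ts x \<and> norm (x 0) < \<delta> \<longrightarrow> (\<forall>t\<ge>0. norm (x t) < \<epsilon>)"
  proof (intro exI[of _ "\<epsilon> / sqrt C"] conjI allI impI)
    show "0 < \<epsilon> / sqrt C" using \<epsilon> C by simp
    fix x t assume x: "sampled_solution A A1 ts x \<and> norm (x 0) < \<epsilon> / sqrt C" and t: "0 \<le> (t::real)"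
    have "(norm (x t))^2 \<le> C * (norm (x 0))^2 * exp (- g * t)" using bound x t by blast
    also have "\<dots> \<le> C * (norm (x 0))^2" using C g t by (intro mult_left_le) auto
    also have "\<dots> < C * (\<epsilon> / sqrt C)^2"
      using x C by (intro mult_strict_left_mono power_strict_mono) auto
    also have "\<dots> = \<epsilon>^2" using C by (simp add: power_divide)
    finally show "norm (x t) < \<epsilon>" using \<epsilon> by (simp add: power_less_imp_less_base)
  qed
next
  show "\<exists>\<eta>>0. \<forall>x. sampled_solution A A1 ts x \<and> norm (x 0) < \<eta> \<longrightarrow> (x \<longlongrightarrow> 0) at_top"
  proof (intro exI[of _ 1] conjI allI impI zero_less_one)
    fix x assume x: "sampled_solution A A1 ts x \<and> norm (x 0) < 1"
    have "filterlim (\<lambda>t. - g * t) at_bot at_top"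
      using g by (intro filterlim_tendsto_neg_mult_at_bot[OF tendsto_const _ filterlim_ident]) simp
    then have "((\<lambda>t. exp (- g * t)) \<longlongrightarrow> 0) at_top"
      by (rule filterlim_compose[OF exp_at_bot])
    then have "((\<lambda>t. C * (norm (x 0))^2 * exp (- g * t)) \<longlongrightarrow> 0) at_top"
      by (rule tendsto_mult_right_zero)
    then have lim: "((\<lambda>t. sqrt (C * (norm (x 0))^2 * exp (- g * t))) \<longlongrightarrow> 0) at_top"
      using tendsto_real_sqrt by fastforce
    have "eventually (\<lambda>t. norm (x t) \<le> sqrt (C * (norm (x 0))^2 * exp (- g * t))) at_top"
      using eventually_ge_at_top[of 0] by eventually_elim (use bound x in \<open>simp add: real_le_rsqrt\<close>)
    then show "(x \<longlongrightarrow> 0) at_top" using lim by (rule Lim_null_comparison)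
  qed
qed

lemma sampled_solution_lyapunov_decay:
  fixes A A1 P Q :: "real^'n^'n" and x :: "real \<Rightarrow> real^'n" and ts :: "nat \<Rightarrow> real"
  assumes sol: "sampled_solution A A1 ts x"
    and ts0: "ts 0 = 0" and steps: "\<And>k. ts k \<le> ts (Suc k) \<and> ts (Suc k) - ts k \<le> \<Delta>"
    and unbounded: "filterlim ts at_top sequentially"
    and symP: "transpose P = P" and lyap: "transpose (A + A1) ** P + P ** (A + A1) = - Q"
    and Qge: "\<And>x. q * (norm x)^2 \<le> x \<bullet> (Q *v x)"
    and p: "0 < sigma_max P"
    and hold: "16 * sigma_max P * (sigma_max A + sigma_max A1)^2 * \<Delta> \<le> q"
    and t: "0 \<le> t"
  shows "exp (q / (2 * sigma_max P) * t) * (x t \<bullet> (P *v x t)) \<le> x 0 \<bullet> (P *v x 0)"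
proof -
  define W where "W s = exp (q / (2 * sigma_max P) * s) * (x s \<bullet> (P *v x s))" for s
  have "W s \<le> W (ts k)" if s: "s \<in> {ts k..ts (Suc k)}" for k s
    unfolding W_def
  proof (rule lyapunov_decay_on_hold_interval[OF _ symP lyap Qge p _ s])
    show "(x has_vector_derivative A *v x s + A1 *v x (ts k)) (at s within {ts k..ts (Suc k)})"
      if "s \<in> {ts k..ts (Suc k)}" for s
      using sol that unfolding sampled_solution_def by blast
    have "16 * sigma_max P * (sigma_max A + sigma_max A1)^2 * (ts (Suc k) - ts k)
        \<le> 16 * sigma_max P * (sigma_max A + sigma_max A1)^2 * \<Delta>"
      using steps[of k] p by (intro mult_left_mono) auto
    then show "16 * sigma_max P * (sigma_max A + sigma_max A1)^2 * (ts (Suc k) - ts k) \<le> q"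
      using hold by linarith
  qed
  with le_initial_if_nonincreasing_on_sampling_intervals[OF ts0 _ unbounded _ t] steps
  have "W t \<le> W 0" by blast
  then show ?thesis unfolding W_def by simp
qed

lemma sampled_asymp_stable_if_lyapunov:
  fixes A A1 P Q :: "real^'n^'n" and ts :: "nat \<Rightarrow> real"
  assumes posP: "sym_pos_def P" and posQ: "sym_pos_def Q"
    and lyap: "transpose (A + A1) ** P + P ** (A + A1) = - Q"
    and ts0: "ts 0 = 0" and steps: "\<And>k. ts k < ts (Suc k) \<and> ts (Suc k) - ts k \<le> \<Delta>"
    and unbounded: "filterlim ts at_top sequentially"
    and hold: "\<Delta> \<le> sigma_min Q / (16 * sigma_max P * (sigma_max A + sigma_max A1)^2)"
  shows "sampled_asymp_stable A A1 ts"
proof -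
  define d where "d = 16 * sigma_max P * (sigma_max A + sigma_max A1)^2"
  have "0 < \<Delta>" using steps[of 0] ts0 by simp
  with hold have "0 < sigma_min Q / d" unfolding d_def by linarith
  moreover have "0 \<le> d" unfolding d_def by (simp add: sigma_max_nonneg)
  ultimately have d_pos: "0 < d" and q_pos: "0 < sigma_min Q"
    by (auto simp: zero_less_divide_iff)
  have p: "0 < sigma_max P" using d_pos sigma_max_nonneg[of P] unfolding d_def
    by (metis less_eq_real_def mult_eq_0_iff mult_zero_left)
  have "\<Delta> \<le> sigma_min Q / d" using hold unfolding d_def .
  then have hold': "d * \<Delta> \<le> sigma_min Q" using d_pos by (simp add: pos_le_divide_eq mult.commute)
  obtain l where l: "0 < l" and Pge: "\<And>x. l * (norm x)^2 \<le> x \<bullet> (P *v x)"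
    using sym_pos_def_quadratic_form_ge[OF posP] by blast
  have symP: "transpose P = P" using posP unfolding sym_pos_def_def by simp
  show ?thesis
  proof (rule sampled_asymp_stable_if_exponential_bound)
    show "0 < sigma_max P / l" and "0 < sigma_min Q / (2 * sigma_max P)" using p q_pos l by simp_all
    fix x t assume sol: "sampled_solution A A1 ts x" and t: "0 \<le> (t::real)"
    have "l * (norm (x t))^2 \<le> x t \<bullet> (P *v x t)" by (rule Pge)
    also have "\<dots> \<le> exp (- (sigma_min Q / (2 * sigma_max P)) * t) * (x 0 \<bullet> (P *v x 0))"
      using sampled_solution_lyapunov_decay[OF sol ts0 _ unbounded symP lyap
          sigma_min_quadratic_form_le[OF posQ] p hold'[unfolded d_def] t] steps
      by (simp add: less_imp_le exp_minus field_simps)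
    also have "\<dots> \<le> exp (- (sigma_min Q / (2 * sigma_max P)) * t) * (sigma_max P * (norm (x 0))^2)"
      by (intro mult_left_mono quadratic_form_le_sigma_max) simp
    finally show "(norm (x t))^2 \<le> sigma_max P / l * (norm (x 0))^2 * exp (- (sigma_min Q / (2 * sigma_max P)) * t)"
      using l by (simp add: field_simps)
  qed
qed

theorem proposition1:
  "\<exists>c'>0. \<forall>(A::real^'n^'n) (B::real^'m^'n) (K::real^'n^'m) P Q \<Delta> ts.
     sym_pos_def P \<and> sym_pos_def Q \<and>
     transpose (A + (- (B ** K))) ** P + P ** (A + (- (B ** K))) = - Q \<and>
     \<Delta> \<le> c' * sigma_min Q / (sigma_max P * (sigma_max A + sigma_max (- (B ** K)))^2) \<and>
     ts 0 = 0 \<and> (\<forall>k. ts k < ts (Suc k) \<and> ts (Suc k) - ts k \<le> \<Delta>) \<and>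
     filterlim ts at_top sequentially
     \<longrightarrow> sampled_asymp_stable A (- (B ** K)) ts"
proof (intro exI[of _ "1/16"] conjI allI impI)
  fix A :: "real^'n^'n" and B :: "real^'m^'n" and K :: "real^'n^'m" and P Q \<Delta> ts
  assume "sym_pos_def P \<and> sym_pos_def Q \<and>
     transpose (A + (- (B ** K))) ** P + P ** (A + (- (B ** K))) = - Q \<and>
     \<Delta> \<le> 1/16 * sigma_min Q / (sigma_max P * (sigma_max A + sigma_max (- (B ** K)))^2) \<and>
     ts 0 = 0 \<and> (\<forall>k. ts k < ts (Suc k) \<and> ts (Suc k) - ts k \<le> \<Delta>) \<and>
     filterlim ts at_top sequentially"
  then show "sampled_asymp_stable A (- (B ** K)) ts"
    by (intro sampled_asymp_stable_if_lyapunov[where \<Delta> = \<Delta> and P = P and Q = Q]) auto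
qed simp

end
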